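(* Let $A$ be a real $n\times n$ matrix with strictly negative diagonal, sign matrix $\mathcal{E}_A=(\epsilon_{ij})$, connectivity graph $G_A$ and clique complex $X(G_A)$. Suppose (i) $\epsilon_{ij}\epsilon_{ji}=1$ whenever $\{i,j\}$ ($i\neq j$) is a clique of $X(G_A)$; (ii) $\epsilon_{ij}\epsilon_{jk}\epsilon_{ki}=-1$ whenever $\{i,j,k\}$ (distinct) is a clique of $X(G_A)$; and (iii) $H^1(X(G_A);\mathbb{Z}_2)=0$. Then $A$ is a bipartite matrix.
   Context: The sign matrix $\mathcal{E}_A=(\epsilon_{ij})$ has $\epsilon_{ij}\in\{1,-1,0\}$ equal to the sign of $A_{ij}$. The connectivity graph $G_A$ is the simple graph on $\{1,\dots,n\}$ containing edge $(ij)$, $i\ne j$, unless $A_{ij}=A_{ji}=0$. $X(G_A)$ is its clique complex: the abstract simplicial complex whose simplices are the cliques (sets of pairwise adjacent vertices); cohomology is simplicial cohomology. A real $n\times n$ matrix $A$ is bipartite if $\{1,\dots,n\}$ can be partitioned into disjoint sets $\sigma,\bar\sigma$ such that: if $i\in\sigma,j\in\bar\sigma$ then $A_{ij}\ge0$ and $A_{ji}\ge0$; and if $i,j\in\sigma$ or $i,j\in\bar\sigma$ then $A_{ij}\le0$ and $A_{ji}\le0$. *)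

theory Defs
  imports "HOL-Analysis.Analysis" "HOL-Library.Z2"
begin

text \<open>Matrices are real n x n matrices indexed by a finite type 'n (vertices = UNIV).\<close>

definition sign_matrix :: "real^'n^'n \<Rightarrow> 'n \<Rightarrow> 'n \<Rightarrow> real" where
  "sign_matrix A i j = sgn (A $ i $ j)"

definition conn_edge :: "real^'n^'n \<Rightarrow> 'n \<Rightarrow> 'n \<Rightarrow> bool" where
  "conn_edge A i j \<longleftrightarrow> i \<noteq> j \<and> \<not> (A $ i $ j = 0 \<and> A $ j $ i = 0)"

definition clique_complex :: "real^'n^'n \<Rightarrow> 'n set set" where
  "clique_complex A = {S. S \<noteq> {} \<and> finite S \<and> (\<forall>i\<in>S. \<forall>j\<in>S. i \<noteq> j \<longrightarrow> conn_edge A i j)}"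

text \<open>Vanishing of the first simplicial cohomology with Z_2 coefficients of a simplicial
  complex X (given as its set of simplices): every 1-cocycle (a function on 1-simplices whose
  coboundary vanishes on all 2-simplices) is the coboundary of a 0-cochain.
  Over Z_2 orientation signs are irrelevant.\<close>
definition H1_Z2_trivial :: "'a set set \<Rightarrow> bool" where
  "H1_Z2_trivial X \<longleftrightarrow>
     (\<forall>c :: 'a set \<Rightarrow> bit.
        (\<forall>\<sigma>\<in>X. card \<sigma> = 3 \<longrightarrow> (\<Sum>\<tau>\<in>{\<tau>. \<tau> \<subseteq> \<sigma> \<and> card \<tau> = 2}. c \<tau>) = 0)
        \<longrightarrow> (\<exists>f :: 'a \<Rightarrow> bit. \<forall>\<sigma>\<in>X. card \<sigma> = 2 \<longrightarrow> c \<sigma> = (\<Sum>v\<in>\<sigma>. f v)))"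

definition bipartite_matrix :: "real^'n^'n \<Rightarrow> bool" where
  "bipartite_matrix A \<longleftrightarrow> (\<exists>\<sigma> :: 'n set.
     (\<forall>i j. (i \<in> \<sigma> \<and> j \<notin> \<sigma>) \<longrightarrow> A $ i $ j \<ge> 0 \<and> A $ j $ i \<ge> 0) \<and>
     (\<forall>i j. ((i \<in> \<sigma> \<and> j \<in> \<sigma>) \<or> (i \<notin> \<sigma> \<and> j \<notin> \<sigma>)) \<longrightarrow> A $ i $ j \<le> 0 \<and> A $ j $ i \<le> 0))"

end

theory Submission
  imports Defs
begin

(* Condition (i) says that A is sign-symmetric: A_ij and A_ji always have the
   same sign, so every edge of G_A is either "positive" or "negative".  Record the positive
   edges as a Z_2-valued 1-cochain c on the clique complex.  Condition (ii) says that every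
   triangle carries an odd number of negative edges, i.e. an even number of positive ones,
   so c is a cocycle.  By (iii) it is a coboundary: c {i,j} = f i + f j for some 0-cochain f.
   Hence an edge is positive exactly when its endpoints lie on different sides of the
   partition sigma = {i. f i = 1}; together with the negative diagonal this is the
   definition of a bipartite matrix. *)

lemma sgn_mult_eq_one:
  fixes x y :: real
  assumes "sgn x * sgn y = 1"
  shows "sgn x = sgn y"
  using assms by (cases x "0::real" rule: linorder_cases;
                  cases y "0::real" rule: linorder_cases; simp)

lemma sgn_triple_neg_even_positives:
  fixes x y z :: real
  assumes "x \<noteq> 0" "y \<noteq> 0" "z \<noteq> 0" and "sgn x * sgn y * sgn z = -1"
  shows "of_bool (x > 0) + of_bool (y > 0) + of_bool (z > 0) = (0::bit)"
  using assms by (cases x "0::real" rule: linorder_cases; cases y "0::real" rule: linorder_cases;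
                  cases z "0::real" rule: linorder_cases; simp)

lemma bit_add_eq_of_bool_neq: "(a::bit) + b = of_bool (a \<noteq> b)"
  by (cases a; cases b) auto

lemma doubleton_in_clique_complex:
  "{i, j} \<in> clique_complex A \<longleftrightarrow> i = j \<or> conn_edge A i j"
  unfolding clique_complex_def conn_edge_def by auto

lemma sign_symmetric:
  fixes A :: "real^'n^'n"
  assumes cond_i: "\<forall>i j. i \<noteq> j \<and> {i, j} \<in> clique_complex A \<longrightarrow>
                    sign_matrix A i j * sign_matrix A j i = 1"
  shows "sgn (A $ i $ j) = sgn (A $ j $ i)"
proof (cases "conn_edge A i j")
  case True
  then have "sgn (A $ i $ j) * sgn (A $ j $ i) = 1"
    using cond_i doubleton_in_clique_complex[of i j A]
    unfolding sign_matrix_def conn_edge_def by auto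
  then show ?thesis by (rule sgn_mult_eq_one)
next
  case False
  then show ?thesis unfolding conn_edge_def by auto
qed

lemma sign_symmetric_pos:
  fixes A :: "real^'n^'n"
  assumes "\<And>i j. sgn (A $ i $ j) = sgn (A $ j $ i)"
  shows "A $ i $ j > 0 \<longleftrightarrow> A $ j $ i > 0" and "A $ i $ j = 0 \<longleftrightarrow> A $ j $ i = 0"
  using assms[of i j] by (auto simp: sgn_real_def split: if_splits)

lemma conn_edge_nonzero:
  fixes A :: "real^'n^'n"
  assumes "\<And>i j. sgn (A $ i $ j) = sgn (A $ j $ i)" and "conn_edge A i j"
  shows "A $ i $ j \<noteq> 0"
  using assms(2) sign_symmetric_pos(2)[OF assms(1), of i j] unfolding conn_edge_def by auto

definition positive_edges :: "real^'n^'n \<Rightarrow> 'n set \<Rightarrow> bit" where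
  "positive_edges A \<tau> = of_bool (\<exists>i j. \<tau> = {i, j} \<and> i \<noteq> j \<and> A $ i $ j > 0)"

lemma positive_edges_doubleton:
  fixes A :: "real^'n^'n"
  assumes "\<And>i j. sgn (A $ i $ j) = sgn (A $ j $ i)" and "i \<noteq> j"
  shows "positive_edges A {i, j} = of_bool (A $ i $ j > 0)"
proof -
  have "(\<exists>i' j'. {i, j} = {i', j'} \<and> i' \<noteq> j' \<and> A $ i' $ j' > 0) \<longleftrightarrow> A $ i $ j > 0"
    using assms(2) sign_symmetric_pos(1)[OF assms(1)] by (auto simp: doubleton_eq_iff)
  then show ?thesis unfolding positive_edges_def by simp
qed

lemma faces_of_triangle:
  assumes "i \<noteq> j" "j \<noteq> k" "i \<noteq> k"
  shows "(\<Sum>\<tau>\<in>{\<tau>. \<tau> \<subseteq> {i, j, k} \<and> card \<tau> = 2}. c \<tau>) = c {i, j} + c {j, k} + c {k, i}"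
proof -
  have faces: "{\<tau>. \<tau> \<subseteq> {i, j, k} \<and> card \<tau> = 2} = {{i, j}, {j, k}, {k, i}}"
    using assms by (auto simp: card_2_iff)
  have "{i, j} \<noteq> {j, k}" "{i, j} \<noteq> {k, i}" "{j, k} \<noteq> {k, i}"
    using assms by (auto simp: doubleton_eq_iff)
  then show ?thesis unfolding faces by (simp add: add.assoc)
qed

lemma positive_edges_cocycle:
  fixes A :: "real^'n^'n"
  assumes symm: "\<And>i j. sgn (A $ i $ j) = sgn (A $ j $ i)"
    and cond_ii: "\<forall>i j k. i \<noteq> j \<and> j \<noteq> k \<and> i \<noteq> k \<and> {i, j, k} \<in> clique_complex A \<longrightarrow>
                    sign_matrix A i j * sign_matrix A j k * sign_matrix A k i = -1"
    and \<sigma>: "\<sigma> \<in> clique_complex A" "card \<sigma> = 3"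
  shows "(\<Sum>\<tau>\<in>{\<tau>. \<tau> \<subseteq> \<sigma> \<and> card \<tau> = 2}. positive_edges A \<tau>) = 0"
proof -
  obtain i j k where ijk: "\<sigma> = {i, j, k}" "i \<noteq> j" "j \<noteq> k" "i \<noteq> k"
    using \<sigma>(2) by (auto simp: card_3_iff)
  have edges: "conn_edge A i j" "conn_edge A j k" "conn_edge A k i"
    using \<sigma>(1) ijk unfolding clique_complex_def by auto
  have "sgn (A $ i $ j) * sgn (A $ j $ k) * sgn (A $ k $ i) = -1"
    using cond_ii \<sigma>(1) ijk unfolding sign_matrix_def by auto
  then have "of_bool (A $ i $ j > 0) + of_bool (A $ j $ k > 0) + of_bool (A $ k $ i > 0) = (0::bit)"
    using conn_edge_nonzero[OF symm] edges by (intro sgn_triple_neg_even_positives) auto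
  then show ?thesis
    using ijk by (simp add: faces_of_triangle positive_edges_doubleton[OF symm])
qed

lemma bipartite_from_coboundary:
  fixes A :: "real^'n^'n" and f :: "'n \<Rightarrow> bit"
  assumes diag: "\<forall>i. A $ i $ i < 0"
    and symm: "\<And>i j. sgn (A $ i $ j) = sgn (A $ j $ i)"
    and cobound: "\<forall>\<sigma>\<in>clique_complex A. card \<sigma> = 2 \<longrightarrow> positive_edges A \<sigma> = (\<Sum>v\<in>\<sigma>. f v)"
  shows "bipartite_matrix A"
proof -
  have edge_pos: "A $ i $ j > 0 \<longleftrightarrow> f i \<noteq> f j" if "conn_edge A i j" for i j
  proof -
    have "i \<noteq> j" "{i, j} \<in> clique_complex A"
      using that doubleton_in_clique_complex[of i j A] unfolding conn_edge_def by auto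
    then have "of_bool (A $ i $ j > 0) = f i + f j"
      using cobound positive_edges_doubleton[OF symm] by auto
    then have "of_bool (A $ i $ j > 0) = (of_bool (f i \<noteq> f j) :: bit)"
      by (simp only: bit_add_eq_of_bool_neq)
    then show ?thesis by (simp only: of_bool_eq_iff)
  qed
  (* Off the edges both entries vanish; on the diagonal they are negative. *)
  have across: "A $ i $ j \<ge> 0 \<and> A $ j $ i \<ge> 0" if "f i \<noteq> f j" for i j
    using that edge_pos[of i j] sign_symmetric_pos(1)[OF symm, of i j]
    by (cases "conn_edge A i j") (auto simp: conn_edge_def)
  have within: "A $ i $ j \<le> 0 \<and> A $ j $ i \<le> 0" if "f i = f j" for i j
    using that edge_pos[of i j] sign_symmetric_pos(1)[OF symm, of i j] diag
    by (cases "conn_edge A i j") (auto simp: conn_edge_def less_imp_le not_less)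
  have bit_cases: "b = 0 \<or> b = 1" for b :: bit by (cases b) auto
  show ?thesis unfolding bipartite_matrix_def
    by (rule exI[of _ "{i. f i = 1}"]) (use across within bit_cases in fastforce)
qed

theorem mainTheorem7:
  fixes A :: "real^'n^'n"
  assumes diag: "\<forall>i. A $ i $ i < 0"
    and cond_i: "\<forall>i j. i \<noteq> j \<and> {i, j} \<in> clique_complex A \<longrightarrow>
                    sign_matrix A i j * sign_matrix A j i = 1"
    and cond_ii: "\<forall>i j k. i \<noteq> j \<and> j \<noteq> k \<and> i \<noteq> k \<and> {i, j, k} \<in> clique_complex A \<longrightarrow>
                    sign_matrix A i j * sign_matrix A j k * sign_matrix A k i = -1"
    and cond_iii: "H1_Z2_trivial (clique_complex A)"
  shows "bipartite_matrix A"
proof -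
  have symm: "\<And>i j. sgn (A $ i $ j) = sgn (A $ j $ i)"
    using sign_symmetric[OF cond_i] .
  have "\<forall>\<sigma>\<in>clique_complex A. card \<sigma> = 3 \<longrightarrow>
          (\<Sum>\<tau>\<in>{\<tau>. \<tau> \<subseteq> \<sigma> \<and> card \<tau> = 2}. positive_edges A \<tau>) = 0"
    using positive_edges_cocycle[OF symm cond_ii] by blast
  then obtain f :: "'n \<Rightarrow> bit" where
    "\<forall>\<sigma>\<in>clique_complex A. card \<sigma> = 2 \<longrightarrow> positive_edges A \<sigma> = (\<Sum>v\<in>\<sigma>. f v)"
    using cond_iii unfolding H1_Z2_trivial_def by blast
  then show ?thesis
    using bipartite_from_coboundary[OF diag symm] by blast
qed

end
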